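(* For $i\in\mathbb{N}$ let $\mathrm{pr}_i:\{0,1\}^{\mathbb{N}}\to\mathbb{R}$, $x\mapsto x_i$. For all $t\ge0$ and $f\in L^2$, \[ P_t\nabla_if=e^{-t}(p-\mathrm{pr}_i)\,P_t\Big(\frac{\nabla_if}{p-\mathrm{pr}_i}\Big). \] Consequently, $I_i(P_tf)=\mathbb{E}[|\nabla_iP_tf|]$ satisfies \[ I_i(P_tf)\le 2e^{-t}\max(p,1-p)\,I_i(f). \]
   Context: Fix $p\in(0,1)$, $\mathbb{N}=\{0,1,2,\dots\}$, $X=(X_i)_{i\in\mathbb{N}}$ i.i.d. Bernoulli($p$); $L^2$ is the set of $f:\{0,1\}^{\mathbb{N}}\to\mathbb{R}$ with $\mathbb{E}[f(X)^2]<\infty$. The bit-resampling process $(X^t)_{t\ge0}$ resamples each coordinate independently as a fresh Bernoulli($p$) at the rings of its own rate-$1$ Poisson clock; $P_tf(x)=\mathbb{E}[f(X^t)\mid X^0=x]$. $\sigma_i^\xi(x)$ is $x$ with coordinate $i$ set to $\xi$; $\nabla_if(x)=\mathbb{E}^\xi[f(\sigma_i^\xi(x))]-f(x)$ with $\xi\sim$ Bernoulli($p$). The influence is $I_i(f)=\mathbb{E}[|\nabla_if(X)|]$, which equals $\mathbb{E}\big[|\mathbb{E}[f(X)\mid(X_j)_{j\ne i}]-f(X)|\big]$. *)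

theory Defs
  imports "HOL-Probability.Probability"
begin

text \<open>Configurations in the hypercube {0,1}^N are functions nat => bool (True = 1).
  The base measure is the law of X = (X_i) i.i.d. Bernoulli(p).\<close>

definition bern_prod :: "real \<Rightarrow> (nat \<Rightarrow> bool) measure" where
  "bern_prod p = PiM UNIV (\<lambda>_. measure_pmf (bernoulli_pmf p))"

definition L2 :: "real \<Rightarrow> ((nat \<Rightarrow> bool) \<Rightarrow> real) set" where
  "L2 p = {f. f \<in> borel_measurable (bern_prod p) \<and> integrable (bern_prod p) (\<lambda>x. (f x)\<^sup>2)}"

definition pr :: "nat \<Rightarrow> (nat \<Rightarrow> bool) \<Rightarrow> real" where
  "pr i x = (if x i then 1 else 0)"

text \<open>Law at time t of one coordinate of the bit-resampling process started at b:
  with probability exp(-t) the rate-1 Poisson clock has not rung in [0,t] and the bit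
  is still b; otherwise the bit equals the (fresh Bernoulli(p)) value of the last resampling.\<close>
definition coord_kernel :: "real \<Rightarrow> real \<Rightarrow> bool \<Rightarrow> bool pmf" where
  "coord_kernel p t b =
     bind_pmf (bernoulli_pmf (exp (- t))) (\<lambda>no_ring. if no_ring then return_pmf b else bernoulli_pmf p)"

definition resample_kernel :: "real \<Rightarrow> real \<Rightarrow> (nat \<Rightarrow> bool) \<Rightarrow> (nat \<Rightarrow> bool) measure" where
  "resample_kernel p t x = PiM UNIV (\<lambda>j. measure_pmf (coord_kernel p t (x j)))"

definition Pt :: "real \<Rightarrow> real \<Rightarrow> ((nat \<Rightarrow> bool) \<Rightarrow> real) \<Rightarrow> (nat \<Rightarrow> bool) \<Rightarrow> real" where
  "Pt p t f x = (\<integral>y. f y \<partial>resample_kernel p t x)"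

definition nabla :: "real \<Rightarrow> nat \<Rightarrow> ((nat \<Rightarrow> bool) \<Rightarrow> real) \<Rightarrow> (nat \<Rightarrow> bool) \<Rightarrow> real" where
  "nabla p i f x = (\<integral>\<xi>. f (x(i := \<xi>)) \<partial>measure_pmf (bernoulli_pmf p)) - f x"

definition influence :: "real \<Rightarrow> nat \<Rightarrow> ((nat \<Rightarrow> bool) \<Rightarrow> real) \<Rightarrow> real" where
  "influence p i f = (\<integral>x. \<bar>nabla p i f x\<bar> \<partial>bern_prod p)"

end

theory Submission
  imports Defs
begin

(*
  Write d_i f x = f (x with x_i = 1) - f (x with x_i = 0) (coord_diff below), so that
  nabla_i f = (p - pr_i) d_i f and d_i f does not depend on x_i. Under the dynamics coordinate i moves independently of the
  others, and from x_i = c its law at time t is e^-t delta_c + (1 - e^-t) Bernoulli(p). The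
  Bernoulli part has mean p, so averaging p - xi against this law gives e^-t (p - c). This yields
  P_t ((p - pr_i) g) = e^-t (p - pr_i) P_t g for every g not depending on x_i (the identity, with
  g = d_i f), and in the same way nabla_i P_t f = e^-t (p - pr_i) P_t d_i f.
  Since E |(p - X_i) h(X)| = 2p(1-p) E |h(X)| for h not depending on x_i, Jensen's inequality and
  the invariance of the product Bernoulli measure under P_t give
  I_i(P_t f) = e^-t 2p(1-p) E |P_t d_i f| <= e^-t 2p(1-p) E |d_i f| = e^-t I_i(f),
  which is the claimed bound with 1 in place of 2 max(p, 1-p) >= 1.
*)

section \<open>Products of probability mass functions\<close>

definition PiM_pmf :: "('i \<Rightarrow> 'a pmf) \<Rightarrow> ('i \<Rightarrow> 'a) measure" where
  "PiM_pmf Q = PiM UNIV (\<lambda>j. measure_pmf (Q j))"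

definition PiM_pmf_except :: "'i \<Rightarrow> ('i \<Rightarrow> 'a pmf) \<Rightarrow> ('i \<Rightarrow> 'a) measure" where
  "PiM_pmf_except i Q = PiM (UNIV - {i}) (\<lambda>j. measure_pmf (Q j))"

lemma space_PiM_pmf [simp]: "space (PiM_pmf Q) = UNIV"
  by (simp add: PiM_pmf_def space_PiM)

lemma sets_PiM_pmf_cong: "sets (PiM_pmf Q) = sets (PiM_pmf Q')"
  unfolding PiM_pmf_def by (rule sets_PiM_cong) auto

lemma prob_space_PiM_pmf: "prob_space (PiM_pmf Q)"
  unfolding PiM_pmf_def by (rule prob_space_PiM) (simp add: prob_space_measure_pmf)

lemma emeasure_PiM_pmf_UNIV [simp]: "emeasure (PiM_pmf Q) UNIV = 1"
  using prob_space.emeasure_space_1[OF prob_space_PiM_pmf] by simp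

lemma prob_space_PiM_pmf_except: "prob_space (PiM_pmf_except i Q)"
  unfolding PiM_pmf_except_def by (rule prob_space_PiM) (simp add: prob_space_measure_pmf)

lemma PiM_pmf_except_cong: "(\<And>j. j \<noteq> i \<Longrightarrow> Q j = Q' j) \<Longrightarrow> PiM_pmf_except i Q = PiM_pmf_except i Q'"
  unfolding PiM_pmf_except_def by (rule PiM_cong) auto

lemma measurable_component_PiM_pmf [measurable]: "(\<lambda>x. F (x j)) \<in> borel_measurable (PiM_pmf Q)"
proof -
  have "(\<lambda>x. x j) \<in> measurable (PiM_pmf Q) (measure_pmf (Q j))"
    unfolding PiM_pmf_def by (rule measurable_component_singleton) simp
  then show ?thesis by (rule measurable_compose) simp
qed

lemma measurable_fun_upd_pair_PiM_pmf:
  "(\<lambda>(b, X). X(i := b)) \<in> measurable (measure_pmf A \<Otimes>\<^sub>M PiM_pmf_except i Q) (PiM_pmf Q')"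
  unfolding PiM_pmf_def PiM_pmf_except_def
proof (rule measurable_PiM_single')
  fix j
  let ?R = "PiM (UNIV - {i}) (\<lambda>j. measure_pmf (Q j))"
  have "(\<lambda>X. X j) \<in> measurable ?R (measure_pmf (Q' j))" if "j \<noteq> i"
    using measurable_component_singleton[of j "UNIV - {i}" "\<lambda>j. measure_pmf (Q j)"] that
    by (simp add: measurable_def)
  then show "(\<lambda>z. (case z of (b, X) \<Rightarrow> X(i := b)) j)
      \<in> measurable (measure_pmf A \<Otimes>\<^sub>M ?R) (measure_pmf (Q' j))"
    by (cases "j = i") (simp_all add: case_prod_beta')
qed (auto simp: space_PiM space_pair_measure)

lemma measurable_fun_upd_PiM_pmf_except:
  "(\<lambda>X. X(i := b)) \<in> measurable (PiM_pmf_except i Q) (PiM_pmf Q')"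
  using measurable_compose[OF measurable_Pair1'[of b "measure_pmf (Q i)"]
      measurable_fun_upd_pair_PiM_pmf]
  by simp

lemma measurable_fun_upd_PiM_pmf:
  "(\<lambda>X. X(i := b)) \<in> measurable (PiM_pmf Q) (PiM_pmf Q')"
  unfolding PiM_pmf_def
  by (rule measurable_PiM_single') (auto simp: space_PiM)

lemma PiM_pmf_split:
  "PiM_pmf Q = distr (measure_pmf (Q i) \<Otimes>\<^sub>M PiM_pmf_except i Q) (PiM_pmf Q) (\<lambda>(b, X). X(i := b))"
proof -
  have "insert i (UNIV - {i}) = UNIV" by auto
  then show ?thesis
    using distr_pair_PiM_eq_PiM[of "UNIV - {i}" "\<lambda>j. measure_pmf (Q j)" i]
    unfolding PiM_pmf_def PiM_pmf_except_def by (simp add: prob_space_measure_pmf)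
qed

lemma pair_sigma_finite_pmf_PiM_pmf_except:
  "pair_sigma_finite (measure_pmf A) (PiM_pmf_except i Q)"
  by (intro pair_sigma_finite.intro prob_space_imp_sigma_finite prob_space_PiM_pmf_except
      prob_space_measure_pmf)

lemma nn_integral_PiM_pmf_split:
  assumes h[measurable]: "h \<in> borel_measurable (PiM_pmf Q)"
  shows "(\<integral>\<^sup>+y. h y \<partial>PiM_pmf Q) = (\<integral>\<^sup>+b. \<integral>\<^sup>+X. h (X(i := b)) \<partial>PiM_pmf_except i Q \<partial>Q i)"
proof -
  interpret R: prob_space "PiM_pmf_except i Q" by (rule prob_space_PiM_pmf_except)
  have "(\<integral>\<^sup>+y. h y \<partial>PiM_pmf Q)
      = (\<integral>\<^sup>+z. h ((\<lambda>(b, X). X(i := b)) z) \<partial>(measure_pmf (Q i) \<Otimes>\<^sub>M PiM_pmf_except i Q))"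
    by (subst PiM_pmf_split[of Q i], rule nn_integral_distr[OF measurable_fun_upd_pair_PiM_pmf])
      simp
  also have "\<dots> = (\<integral>\<^sup>+b. \<integral>\<^sup>+X. h (X(i := b)) \<partial>PiM_pmf_except i Q \<partial>Q i)"
    by (subst R.nn_integral_fst[symmetric])
      (auto intro: measurable_compose[OF measurable_fun_upd_pair_PiM_pmf h])
  finally show ?thesis .
qed

lemma integrable_PiM_pmf_split_iff:
  fixes g :: "('i \<Rightarrow> 'a) \<Rightarrow> real"
  assumes "g \<in> borel_measurable (PiM_pmf Q)"
  shows "integrable (PiM_pmf Q) g \<longleftrightarrow>
     integrable (measure_pmf (Q i) \<Otimes>\<^sub>M PiM_pmf_except i Q) (\<lambda>(b, X). g (X(i := b)))"
  by (subst PiM_pmf_split[of Q i],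
      subst integrable_distr_eq[OF measurable_fun_upd_pair_PiM_pmf assms])
    (simp add: case_prod_beta')

lemma integrable_PiM_pmf_slice:
  fixes g :: "('i \<Rightarrow> 'a) \<Rightarrow> real"
  assumes g: "integrable (PiM_pmf Q) g" and b: "b \<in> set_pmf (Q i)"
  shows "integrable (PiM_pmf_except i Q) (\<lambda>X. g (X(i := b)))"
proof -
  interpret pair_sigma_finite "measure_pmf (Q i)" "PiM_pmf_except i Q"
    by (rule pair_sigma_finite_pmf_PiM_pmf_except)
  have "integrable (measure_pmf (Q i) \<Otimes>\<^sub>M PiM_pmf_except i Q) (\<lambda>(b, X). g (X(i := b)))"
    using g integrable_PiM_pmf_split_iff[OF borel_measurable_integrable[OF g]] by simp
  from AE_integrable_fst'[OF this] b show ?thesis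
    by (simp add: AE_measure_pmf_iff)
qed

lemma
  fixes g :: "('i \<Rightarrow> 'a::finite) \<Rightarrow> real"
  assumes g[measurable]: "g \<in> borel_measurable (PiM_pmf Q)"
    and slices: "\<And>b. integrable (PiM_pmf_except i Q) (\<lambda>X. g (X(i := b)))"
  shows integrable_PiM_pmf_slices: "integrable (PiM_pmf Q) g"
    and integral_PiM_pmf_slices:
      "integral\<^sup>L (PiM_pmf Q) g = (\<Sum>b\<in>UNIV. pmf (Q i) b * (\<integral>X. g (X(i := b)) \<partial>PiM_pmf_except i Q))"
proof -
  interpret pair_sigma_finite "measure_pmf (Q i)" "PiM_pmf_except i Q"
    by (rule pair_sigma_finite_pmf_PiM_pmf_except)
  have gm: "(\<lambda>(b, X). g (X(i := b))) \<in> borel_measurable (measure_pmf (Q i) \<Otimes>\<^sub>M PiM_pmf_except i Q)"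
    using measurable_compose[OF measurable_fun_upd_pair_PiM_pmf g] by (simp add: case_prod_beta')
  have pint: "integrable (measure_pmf (Q i) \<Otimes>\<^sub>M PiM_pmf_except i Q) (\<lambda>(b, X). g (X(i := b)))"
    by (rule Fubini_integrable[OF gm])
      (auto intro!: integrable_measure_pmf_finite slices simp: AE_measure_pmf_iff)
  then show "integrable (PiM_pmf Q) g"
    using integrable_PiM_pmf_split_iff[OF g] by blast
  have "integral\<^sup>L (PiM_pmf Q) g
      = (\<integral>z. g ((\<lambda>(b, X). X(i := b)) z) \<partial>(measure_pmf (Q i) \<Otimes>\<^sub>M PiM_pmf_except i Q))"
    by (subst PiM_pmf_split[of Q i], rule integral_distr[OF measurable_fun_upd_pair_PiM_pmf g])
  also have "\<dots> = (\<integral>b. (\<integral>X. g (X(i := b)) \<partial>PiM_pmf_except i Q) \<partial>Q i)"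
    using integral_fst'[OF pint] by (simp add: case_prod_beta')
  also have "\<dots> = (\<Sum>b\<in>UNIV. pmf (Q i) b * (\<integral>X. g (X(i := b)) \<partial>PiM_pmf_except i Q))"
    by (subst integral_measure_pmf[of UNIV]) (auto simp: mult.commute)
  finally show "integral\<^sup>L (PiM_pmf Q) g
      = (\<Sum>b\<in>UNIV. pmf (Q i) b * (\<integral>X. g (X(i := b)) \<partial>PiM_pmf_except i Q))" .
qed

lemma integral_PiM_pmf_invariant:
  fixes g :: "('i \<Rightarrow> 'a::finite) \<Rightarrow> real"
  assumes g[measurable]: "g \<in> borel_measurable (PiM_pmf Q)" and inv: "\<And>y b. g (y(i := b)) = g y"
  shows "integral\<^sup>L (PiM_pmf Q) g = integral\<^sup>L (PiM_pmf_except i Q) g"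
proof (cases "integrable (PiM_pmf_except i Q) g")
  case True
  have "integral\<^sup>L (PiM_pmf Q) g = (\<Sum>b\<in>UNIV. pmf (Q i) b) * integral\<^sup>L (PiM_pmf_except i Q) g"
    using integral_PiM_pmf_slices[OF g, of i] True by (simp only: inv sum_distrib_right)
  then show ?thesis
    by (simp only: sum_pmf_eq_1[OF finite subset_UNIV] mult_1)
next
  case False
  obtain b where "b \<in> set_pmf (Q i)"
    using set_pmf_not_empty[of "Q i"] by blast
  then have "\<not> integrable (PiM_pmf Q) g"
    using integrable_PiM_pmf_slice[of Q g b i] False by (simp only: inv) blast
  with False show ?thesis
    using not_integrable_integral_eq by metis
qed

lemma integrable_PiM_pmf_fun_upd:
  fixes g :: "('i \<Rightarrow> 'a::finite) \<Rightarrow> real"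
  assumes g: "integrable (PiM_pmf Q) g" and b: "b \<in> set_pmf (Q i)"
  shows "integrable (PiM_pmf Q) (\<lambda>y. g (y(i := b)))"
proof (rule integrable_PiM_pmf_slices)
  show "(\<lambda>y. g (y(i := b))) \<in> borel_measurable (PiM_pmf Q)"
    using measurable_compose[OF measurable_fun_upd_PiM_pmf borel_measurable_integrable[OF g]] .
  show "integrable (PiM_pmf_except i Q) (\<lambda>X. g (X(i := b', i := b)))" for b'
    using integrable_PiM_pmf_slice[OF g b] by simp
qed

lemma emeasure_PiM_pmf_emb:
  assumes "finite J"
  shows "emeasure (PiM_pmf Q) (prod_emb UNIV (\<lambda>j. measure_pmf (Q' j)) J (Pi\<^sub>E J E))
    = (\<Prod>j\<in>J. emeasure (measure_pmf (Q j)) (E j))"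
proof -
  have "prod_emb UNIV (\<lambda>j. measure_pmf (Q' j)) J (Pi\<^sub>E J E)
      = prod_emb UNIV (\<lambda>j. measure_pmf (Q j)) J (Pi\<^sub>E J E)"
    by (simp add: prod_emb_def)
  then show ?thesis
    unfolding PiM_pmf_def using assms by (simp add: emeasure_PiM_emb prob_space_measure_pmf)
qed

lemma measurable_PiM_pmf_kernel:
  "(\<lambda>x. PiM_pmf (\<lambda>j. \<kappa> (x j))) \<in> measurable (PiM_pmf Q) (subprob_algebra (PiM_pmf Q'))"
proof (rule measurable_subprob_algebra_generated[where \<Omega>=UNIV
    and G="prod_algebra UNIV (\<lambda>j. measure_pmf (Q' j))"])
  show "sets (PiM_pmf Q') = sigma_sets UNIV (prod_algebra UNIV (\<lambda>j. measure_pmf (Q' j)))"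
    unfolding PiM_pmf_def by (subst sets_PiM) (simp add: PiE_UNIV_domain)
  show "Int_stable (prod_algebra UNIV (\<lambda>j. measure_pmf (Q' j)))"
    by (rule Int_stable_prod_algebra)
  show "subprob_space (PiM_pmf (\<lambda>j. \<kappa> (a j)))" for a
    by (rule prob_space_imp_subprob_space, rule prob_space_PiM_pmf)
  show "sets (PiM_pmf (\<lambda>j. \<kappa> (a j))) = sets (PiM_pmf Q')" for a
    by (rule sets_PiM_pmf_cong)
  show "(\<lambda>a. emeasure (PiM_pmf (\<lambda>j. \<kappa> (a j))) UNIV) \<in> borel_measurable (PiM_pmf Q)"
    by simp
  fix A assume "A \<in> prod_algebra UNIV (\<lambda>j. measure_pmf (Q' j))"
  then obtain J E where J: "finite J"
    and A: "A = prod_emb UNIV (\<lambda>j. measure_pmf (Q' j)) J (Pi\<^sub>E J E)"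
    by (auto elim!: prod_algebraE)
  have "(\<lambda>a. \<Prod>j\<in>J. emeasure (measure_pmf (\<kappa> (a j))) (E j)) \<in> borel_measurable (PiM_pmf Q)"
    by measurable
  then show "(\<lambda>a. emeasure (PiM_pmf (\<lambda>j. \<kappa> (a j))) A) \<in> borel_measurable (PiM_pmf Q)"
    unfolding A emeasure_PiM_pmf_emb[OF J] .
qed auto

lemma nn_integral_PiM_pmf_mult_invariant:
  assumes h[measurable]: "h \<in> borel_measurable (PiM_pmf Q)" and inv: "\<And>y b. h (y(i := b)) = h y"
  shows "(\<integral>\<^sup>+y. u (y i) * h y \<partial>PiM_pmf Q) = (\<integral>\<^sup>+b. u b \<partial>Q i) * (\<integral>\<^sup>+y. h y \<partial>PiM_pmf Q)"
proof -
  interpret R: prob_space "PiM_pmf_except i Q" by (rule prob_space_PiM_pmf_except)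
  have hR: "(\<lambda>X. h (X(i := b))) \<in> borel_measurable (PiM_pmf_except i Q)" for b
    by (rule measurable_compose[OF measurable_fun_upd_PiM_pmf_except h])
  have "(\<integral>\<^sup>+y. u (y i) * h y \<partial>PiM_pmf Q) = (\<integral>\<^sup>+b. u b * (\<integral>\<^sup>+X. h X \<partial>PiM_pmf_except i Q) \<partial>Q i)"
    using hR by (subst nn_integral_PiM_pmf_split[of _ _ i]) (simp_all add: inv nn_integral_cmult)
  also have "\<dots> = (\<integral>\<^sup>+b. u b \<partial>Q i) * (\<integral>\<^sup>+X. h X \<partial>PiM_pmf_except i Q)"
    by (rule nn_integral_multc) simp
  also have "(\<integral>\<^sup>+X. h X \<partial>PiM_pmf_except i Q) = (\<integral>\<^sup>+y. h y \<partial>PiM_pmf Q)"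
    by (subst nn_integral_PiM_pmf_split[OF h, of i]) (simp add: inv measure_pmf.emeasure_space_1)
  finally show ?thesis .
qed

lemma nn_integral_PiM_pmf_prod:
  assumes "finite J"
  shows "(\<integral>\<^sup>+y. (\<Prod>j\<in>J. c j (y j)) \<partial>PiM_pmf Q) = (\<Prod>j\<in>J. \<integral>\<^sup>+b. c j b \<partial>Q j)"
  using assms
proof (induction J rule: finite_induct)
  case empty
  then show ?case
    by simp
next
  case (insert i J)
  have "(\<integral>\<^sup>+y. (\<Prod>j\<in>insert i J. c j (y j)) \<partial>PiM_pmf Q)
      = (\<integral>\<^sup>+y. c i (y i) * (\<Prod>j\<in>J. c j (y j)) \<partial>PiM_pmf Q)"
    using insert by simp
  also have "\<dots> = (\<integral>\<^sup>+b. c i b \<partial>Q i) * (\<integral>\<^sup>+y. (\<Prod>j\<in>J. c j (y j)) \<partial>PiM_pmf Q)"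
    using insert(2)
    by (intro nn_integral_PiM_pmf_mult_invariant) (measurable, auto intro: prod.cong)
  finally show ?case
    using insert by simp
qed

lemma bind_PiM_pmf_stationary:
  assumes q: "bind_pmf q \<kappa> = q"
  shows "bind (PiM_pmf (\<lambda>_::'i. q)) (\<lambda>x. PiM_pmf (\<lambda>j. \<kappa> (x j))) = PiM_pmf (\<lambda>_. q)"
    (is "bind ?M ?K = ?M")
proof -
  have K: "?K \<in> measurable ?M (subprob_algebra ?M)"
    by (rule measurable_PiM_pmf_kernel)
  have q_emeasure: "(\<integral>\<^sup>+b. emeasure (\<kappa> b) X \<partial>q) = emeasure q X" for X
    by (metis q emeasure_bind_pmf)
  have "bind ?M ?K = PiM UNIV (\<lambda>_. measure_pmf q)"
  proof (rule measure_eqI_PiM_infinite)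
    have "sets (bind ?M ?K) = sets ?M"
      by (rule sets_bind[OF sets_kernel[OF K]]) simp_all
    then show "sets (bind ?M ?K) = sets (PiM UNIV (\<lambda>_. measure_pmf q))"
      by (simp add: PiM_pmf_def)
    show "finite_measure (bind ?M ?K)"
      by (intro subprob_space.axioms(1) subprob_space_bind[OF _ K] prob_space_imp_subprob_space
          prob_space_PiM_pmf)
    fix A and J :: "'i set" assume J: "finite J"
    let ?C = "prod_emb UNIV (\<lambda>_. measure_pmf q) J (Pi\<^sub>E J A)"
    have "?C \<in> sets ?M"
      unfolding PiM_pmf_def using J by (intro sets_PiM_I) auto
    then have "emeasure (bind ?M ?K) ?C = (\<integral>\<^sup>+x. emeasure (?K x) ?C \<partial>?M)"
      by (intro emeasure_bind[OF _ K]) simp_all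
    also have "\<dots> = (\<integral>\<^sup>+x. (\<Prod>j\<in>J. emeasure (\<kappa> (x j)) (A j)) \<partial>?M)"
      by (intro nn_integral_cong emeasure_PiM_pmf_emb J)
    also have "\<dots> = (\<Prod>j\<in>J. emeasure q (A j))"
      using nn_integral_PiM_pmf_prod[OF J, of "\<lambda>_. q" "\<lambda>j b. emeasure (\<kappa> b) (A j)"]
      by (simp add: q_emeasure)
    also have "\<dots> = emeasure ?M ?C"
      by (rule emeasure_PiM_pmf_emb[OF J, symmetric])
    finally show "emeasure (bind ?M ?K) ?C = emeasure (PiM UNIV (\<lambda>_. measure_pmf q)) ?C"
      by (simp add: PiM_pmf_def)
  qed simp
  then show ?thesis
    by (simp add: PiM_pmf_def)
qed

lemma AE_integrable_kernel_if_stationary: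
  fixes g :: "'a \<Rightarrow> real"
  assumes K: "K \<in> measurable M (subprob_algebra M)" and stationary: "bind M K = M"
    and g: "integrable M g"
  shows "AE x in M. integrable (K x) g"
proof -
  have [measurable]: "g \<in> borel_measurable M"
    using g by (rule borel_measurable_integrable)
  have "(\<integral>\<^sup>+x. \<integral>\<^sup>+y. ennreal (norm (g y)) \<partial>K x \<partial>M) = (\<integral>\<^sup>+y. ennreal (norm (g y)) \<partial>M)"
    using nn_integral_bind[OF _ K, of "\<lambda>y. ennreal (norm (g y))"] by (simp add: stationary)
  also have "\<dots> < \<infinity>"
    using g by (simp add: integrable_iff_bounded)
  finally have "AE x in M. (\<integral>\<^sup>+y. ennreal (norm (g y)) \<partial>K x) \<noteq> \<infinity>"
    by (intro nn_integral_PInf_AE measurable_compose[OF K nn_integral_measurable_subprob_algebra])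
      simp_all
  then show ?thesis
  proof (rule AE_mp, intro AE_I2 impI)
    fix x assume x: "x \<in> space M" and "(\<integral>\<^sup>+y. ennreal (norm (g y)) \<partial>K x) \<noteq> \<infinity>"
    moreover have "g \<in> borel_measurable (K x)"
      by (subst measurable_cong_sets[OF sets_kernel[OF K x] refl]) simp
    ultimately show "integrable (K x) g"
      by (simp add: integrableI_bounded less_top)
  qed
qed

lemma nn_integral_abs_integral_kernel_le:
  fixes g :: "'a \<Rightarrow> real"
  assumes K: "K \<in> measurable M (subprob_algebra M)" and stationary: "bind M K = M"
    and g[measurable]: "g \<in> borel_measurable M"
  shows "(\<integral>\<^sup>+x. ennreal \<bar>\<integral>y. g y \<partial>K x\<bar> \<partial>M) \<le> (\<integral>\<^sup>+y. ennreal \<bar>g y\<bar> \<partial>M)"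
proof -
  have "ennreal \<bar>\<integral>y. g y \<partial>K x\<bar> \<le> (\<integral>\<^sup>+y. ennreal \<bar>g y\<bar> \<partial>K x)" for x
    using integral_norm_bound_ennreal[of "K x" g]
    by (cases "integrable (K x) g") (simp_all add: not_integrable_integral_eq)
  then have "(\<integral>\<^sup>+x. ennreal \<bar>\<integral>y. g y \<partial>K x\<bar> \<partial>M) \<le> (\<integral>\<^sup>+x. \<integral>\<^sup>+y. ennreal \<bar>g y\<bar> \<partial>K x \<partial>M)"
    by (rule nn_integral_mono)
  also have "\<dots> = (\<integral>\<^sup>+y. ennreal \<bar>g y\<bar> \<partial>M)"
    using nn_integral_bind[OF _ K, of "\<lambda>y. ennreal \<bar>g y\<bar>"] by (simp add: stationary)
  finally show ?thesis .
qed

section \<open>The bit-resampling semigroup\<close>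

lemma bern_prod_eq_PiM_pmf: "bern_prod p = PiM_pmf (\<lambda>_. bernoulli_pmf p)"
  by (simp add: bern_prod_def PiM_pmf_def)

lemma measurable_bern_prod_PiM_pmf:
  "g \<in> borel_measurable (bern_prod p) \<Longrightarrow> g \<in> borel_measurable (PiM_pmf Q)"
  unfolding bern_prod_eq_PiM_pmf by (subst measurable_cong_sets[OF sets_PiM_pmf_cong refl])

lemma measurable_fun_upd_bern_prod [measurable]:
  "(\<lambda>x. x(i := b)) \<in> measurable (bern_prod p) (bern_prod p)"
  unfolding bern_prod_eq_PiM_pmf by (rule measurable_fun_upd_PiM_pmf)

lemma prob_space_bern_prod: "prob_space (bern_prod p)"
  unfolding bern_prod_eq_PiM_pmf by (rule prob_space_PiM_pmf)

lemma resample_kernel_eq_PiM_pmf: "resample_kernel p t x = PiM_pmf (\<lambda>j. coord_kernel p t (x j))"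
  by (simp add: resample_kernel_def PiM_pmf_def)

lemma measurable_resample_kernel:
  "resample_kernel p t \<in> measurable (bern_prod p) (subprob_algebra (bern_prod p))"
  unfolding bern_prod_eq_PiM_pmf resample_kernel_eq_PiM_pmf[abs_def]
  by (rule measurable_PiM_pmf_kernel)

lemma measurable_Pt [measurable]:
  "g \<in> borel_measurable (bern_prod p) \<Longrightarrow> Pt p t g \<in> borel_measurable (bern_prod p)"
  unfolding Pt_def
  by (rule measurable_compose[OF measurable_resample_kernel integral_measurable_subprob_algebra])

lemma pmf_coord_kernel:
  assumes "0 \<le> p" "p \<le> 1" "0 \<le> t"
  shows "pmf (coord_kernel p t c) b
    = exp (- t) * of_bool (b = c) + (1 - exp (- t)) * pmf (bernoulli_pmf p) b"
  using assms unfolding coord_kernel_def pmf_bind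
  by (subst integral_measure_pmf_real[of UNIV]) (auto simp: UNIV_bool)

lemma bind_bernoulli_coord_kernel:
  assumes "0 \<le> p" "p \<le> 1" "0 \<le> t"
  shows "bind_pmf (bernoulli_pmf p) (coord_kernel p t) = bernoulli_pmf p"
proof (rule pmf_eqI)
  fix b
  show "pmf (bind_pmf (bernoulli_pmf p) (coord_kernel p t)) b = pmf (bernoulli_pmf p) b"
    unfolding pmf_bind using assms
    by (subst integral_measure_pmf_real[of UNIV])
      (cases b, auto simp: UNIV_bool pmf_coord_kernel algebra_simps)
qed

lemma bind_bern_prod_resample_kernel:
  assumes "0 \<le> p" "p \<le> 1" "0 \<le> t"
  shows "bind (bern_prod p) (resample_kernel p t) = bern_prod p"
  unfolding bern_prod_eq_PiM_pmf resample_kernel_eq_PiM_pmf[abs_def]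
  by (rule bind_PiM_pmf_stationary[OF bind_bernoulli_coord_kernel[OF assms]])

lemma pr_eq_of_bool: "pr i x = of_bool (x i)"
  by (simp add: pr_def)

lemma measurable_pr [measurable]: "pr i \<in> borel_measurable (bern_prod p)"
  unfolding bern_prod_eq_PiM_pmf pr_eq_of_bool[abs_def] by measurable

lemma nabla_eq:
  assumes "0 \<le> p" "p \<le> 1"
  shows "nabla p i g x = p * g (x(i := True)) + (1 - p) * g (x(i := False)) - g x"
  using assms by (simp add: nabla_def)

lemma measurable_nabla:
  assumes "0 \<le> p" "p \<le> 1" and [measurable]: "g \<in> borel_measurable (bern_prod p)"
  shows "nabla p i g \<in> borel_measurable (bern_prod p)"
proof -
  have "nabla p i g = (\<lambda>x. p * g (x(i := True)) + (1 - p) * g (x(i := False)) - g x)"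
    using assms(1,2) by (simp add: nabla_eq fun_eq_iff)
  then show ?thesis
    by simp
qed

definition coord_diff :: "nat \<Rightarrow> ((nat \<Rightarrow> bool) \<Rightarrow> real) \<Rightarrow> (nat \<Rightarrow> bool) \<Rightarrow> real" where
  "coord_diff i f x = f (x(i := True)) - f (x(i := False))"

lemma coord_diff_fun_upd [simp]: "coord_diff i f (x(i := b)) = coord_diff i f x"
  by (simp add: coord_diff_def)

lemma measurable_coord_diff [measurable]:
  assumes [measurable]: "f \<in> borel_measurable (bern_prod p)"
  shows "coord_diff i f \<in> borel_measurable (bern_prod p)"
  unfolding coord_diff_def[abs_def] by measurable

lemma nabla_eq_coord_diff:
  assumes "0 \<le> p" "p \<le> 1"
  shows "nabla p i f x = (p - pr i x) * coord_diff i f x"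
  using assms
  by (cases "x i") (simp_all add: nabla_eq coord_diff_def pr_def fun_upd_idem algebra_simps)

lemma PiM_pmf_except_coord_kernel_fun_upd:
  "PiM_pmf_except i (\<lambda>j. coord_kernel p t ((x(i := c)) j))
    = PiM_pmf_except i (\<lambda>j. coord_kernel p t (x j))"
  by (rule PiM_pmf_except_cong) simp

lemma Pt_eq_sum_slices:
  assumes "g \<in> borel_measurable (bern_prod p)"
    and "\<And>b. integrable (PiM_pmf_except i (\<lambda>j. coord_kernel p t (x j))) (\<lambda>X. g (X(i := b)))"
  shows "Pt p t g x = (\<Sum>b\<in>UNIV. pmf (coord_kernel p t (x i)) b *
    (\<integral>X. g (X(i := b)) \<partial>PiM_pmf_except i (\<lambda>j. coord_kernel p t (x j))))"
  unfolding Pt_def resample_kernel_eq_PiM_pmf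
  using assms by (intro integral_PiM_pmf_slices measurable_bern_prod_PiM_pmf)

lemma Pt_eq_integral_except:
  assumes "g \<in> borel_measurable (bern_prod p)" and "\<And>y b. g (y(i := b)) = g y"
  shows "Pt p t g x = (\<integral>X. g X \<partial>PiM_pmf_except i (\<lambda>j. coord_kernel p t (x j)))"
  unfolding Pt_def resample_kernel_eq_PiM_pmf
  using assms by (intro integral_PiM_pmf_invariant measurable_bern_prod_PiM_pmf)

lemma Pt_fun_upd_invariant:
  assumes "g \<in> borel_measurable (bern_prod p)" and "\<And>y b. g (y(i := b)) = g y"
  shows "Pt p t g (x(i := c)) = Pt p t g x"
  using Pt_eq_integral_except[OF assms, of t "x(i := c)"]
    Pt_eq_integral_except[OF assms, of t x]
  unfolding PiM_pmf_except_coord_kernel_fun_upd by simp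

lemma sum_coord_kernel_centered:
  assumes "0 \<le> p" "p \<le> 1" "0 \<le> t"
  shows "(\<Sum>b\<in>UNIV. pmf (coord_kernel p t c) b * (p - of_bool b)) = exp (- t) * (p - of_bool c)"
  using assms by (cases c) (simp_all add: UNIV_bool pmf_coord_kernel algebra_simps)

lemma Pt_centered_coord_mult:
  assumes p: "0 < p" "p < 1" and t: "0 \<le> t"
    and g: "g \<in> borel_measurable (bern_prod p)" and inv: "\<And>y b. g (y(i := b)) = g y"
  shows "Pt p t (\<lambda>y. (p - pr i y) * g y) x = exp (- t) * (p - pr i x) * Pt p t g x"
proof -
  let ?R = "PiM_pmf_except i (\<lambda>j. coord_kernel p t (x j))"
  have slice: "(\<lambda>X. (p - pr i (X(i := b))) * g (X(i := b))) = (\<lambda>X. (p - of_bool b) * g X)" for b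
    by (simp add: pr_eq_of_bool inv)
  have Pt_g: "Pt p t g x = integral\<^sup>L ?R g"
    using g inv by (rule Pt_eq_integral_except)
  show ?thesis
  proof (cases "integrable ?R g")
    case True
    have "Pt p t (\<lambda>y. (p - pr i y) * g y) x
        = (\<Sum>b\<in>UNIV. pmf (coord_kernel p t (x i)) b * ((p - of_bool b) * integral\<^sup>L ?R g))"
      using Pt_eq_sum_slices[of "\<lambda>y. (p - pr i y) * g y" p i t x] g True by (simp add: slice)
    also have "\<dots> = (\<Sum>b\<in>UNIV. pmf (coord_kernel p t (x i)) b * (p - of_bool b)) * integral\<^sup>L ?R g"
      by (simp add: sum_distrib_right mult.assoc)
    also have "\<dots> = exp (- t) * (p - pr i x) * Pt p t g x"
      using p t by (simp add: sum_coord_kernel_centered pr_eq_of_bool Pt_g)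
    finally show ?thesis .
  next
    case False
    obtain b where b: "b \<in> set_pmf (coord_kernel p t (x i))"
      using set_pmf_not_empty[of "coord_kernel p t (x i)"] by blast
    have "p - of_bool b \<noteq> 0"
      using p by auto
    with False have "\<not> integrable ?R (\<lambda>X. (p - pr i (X(i := b))) * g (X(i := b)))"
      by (simp add: slice)
    then have "\<not> integrable (resample_kernel p t x) (\<lambda>y. (p - pr i y) * g y)"
      using integrable_PiM_pmf_slice[of "\<lambda>j. coord_kernel p t (x j)" "\<lambda>y. (p - pr i y) * g y" b i] b
      unfolding resample_kernel_eq_PiM_pmf by blast
    then have "Pt p t (\<lambda>y. (p - pr i y) * g y) x = 0"
      unfolding Pt_def by (rule not_integrable_integral_eq)
    moreover have "Pt p t g x = 0"
      using False Pt_g by (simp add: not_integrable_integral_eq)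
    ultimately show ?thesis
      by simp
  qed
qed

lemma nabla_Pt_eq:
  assumes "0 \<le> p" "p \<le> 1" "0 \<le> t" and f: "f \<in> borel_measurable (bern_prod p)"
    and slices: "\<And>b. integrable (PiM_pmf_except i (\<lambda>j. coord_kernel p t (x j))) (\<lambda>X. f (X(i := b)))"
  shows "nabla p i (Pt p t f) x = exp (- t) * (p - pr i x) * Pt p t (coord_diff i f) x"
proof -
  let ?R = "PiM_pmf_except i (\<lambda>j. coord_kernel p t (x j))"
  define \<phi> where "\<phi> b = (\<integral>X. f (X(i := b)) \<partial>?R)" for b
  have Pt_f: "Pt p t f (x(i := c)) = (\<Sum>b\<in>UNIV. pmf (coord_kernel p t c) b * \<phi> b)" for c
    using Pt_eq_sum_slices[OF f, of i t "x(i := c)"] slices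
    unfolding PiM_pmf_except_coord_kernel_fun_upd by (simp add: \<phi>_def)
  have "Pt p t (coord_diff i f) x = (\<integral>X. coord_diff i f X \<partial>?R)"
    using f by (intro Pt_eq_integral_except) simp_all
  also have "\<dots> = \<phi> True - \<phi> False"
    unfolding \<phi>_def coord_diff_def by (rule Bochner_Integration.integral_diff[OF slices slices])
  finally have Pt_coord_diff: "Pt p t (coord_diff i f) x = \<phi> True - \<phi> False" .
  have "nabla p i (Pt p t f) x
      = p * Pt p t f (x(i := True)) + (1 - p) * Pt p t f (x(i := False)) - Pt p t f (x(i := x i))"
    using assms(1,2) by (simp add: nabla_eq)
  also have "\<dots> = exp (- t) * (p - pr i x) * (\<phi> True - \<phi> False)"
    unfolding Pt_f using assms(1-3)
    by (cases "x i") (simp_all add: UNIV_bool pmf_coord_kernel pr_def algebra_simps)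
  finally show ?thesis
    by (simp add: Pt_coord_diff)
qed

lemma integrable_bern_prod_fun_upd:
  fixes f :: "(nat \<Rightarrow> bool) \<Rightarrow> real"
  assumes "0 < p" "p < 1" and "integrable (bern_prod p) f"
  shows "integrable (bern_prod p) (\<lambda>y. f (y(i := b)))"
  using assms integrable_PiM_pmf_fun_upd[of "\<lambda>_. bernoulli_pmf p" f b i]
  by (simp add: bern_prod_eq_PiM_pmf)

lemma integrable_nabla:
  fixes f :: "(nat \<Rightarrow> bool) \<Rightarrow> real"
  assumes p: "0 < p" "p < 1" and f: "integrable (bern_prod p) f"
  shows "integrable (bern_prod p) (nabla p i f)"
proof -
  have "nabla p i f = (\<lambda>x. p * f (x(i := True)) + (1 - p) * f (x(i := False)) - f x)"
    using p by (simp add: nabla_eq fun_eq_iff)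
  then show ?thesis
    using integrable_bern_prod_fun_upd[OF p f] f by simp
qed

text \<open>This holds only for almost every starting point x: the law of X^t started from x is a product
  measure each of whose factors differs from Bernoulli(p), hence it is singular to bern_prod p.\<close>

lemma AE_integrable_resample_slices:
  fixes f :: "(nat \<Rightarrow> bool) \<Rightarrow> real"
  assumes p: "0 < p" "p < 1" and t: "0 \<le> t" and f: "integrable (bern_prod p) f"
  shows "AE x in bern_prod p.
    \<forall>b. integrable (PiM_pmf_except i (\<lambda>j. coord_kernel p t (x j))) (\<lambda>X. f (X(i := b)))"
proof -
  have "integrable (bern_prod p) (\<lambda>y. f (y(i := b)))" for b
    using p f by (rule integrable_bern_prod_fun_upd)
  then have "AE x in bern_prod p. integrable (resample_kernel p t x) (\<lambda>y. f (y(i := b)))" for b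
    using p t by (intro AE_integrable_kernel_if_stationary measurable_resample_kernel
        bind_bern_prod_resample_kernel) simp_all
  then have "AE x in bern_prod p. \<forall>b. integrable (resample_kernel p t x) (\<lambda>y. f (y(i := b)))"
    by (simp add: AE_all_countable)
  then show ?thesis
  proof (rule eventually_mono, intro allI)
    fix x b assume "\<forall>b. integrable (resample_kernel p t x) (\<lambda>y. f (y(i := b)))"
    moreover obtain b' where "b' \<in> set_pmf (coord_kernel p t (x i))"
      using set_pmf_not_empty[of "coord_kernel p t (x i)"] by blast
    ultimately show "integrable (PiM_pmf_except i (\<lambda>j. coord_kernel p t (x j))) (\<lambda>X. f (X(i := b)))"
      using integrable_PiM_pmf_slice[of "\<lambda>j. coord_kernel p t (x j)" "\<lambda>y. f (y(i := b))" b' i]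
      by (simp add: resample_kernel_eq_PiM_pmf)
  qed
qed

lemma nn_integral_abs_centered_coord_mult:
  assumes "0 \<le> p" "p \<le> 1"
    and h: "h \<in> borel_measurable (bern_prod p)" and inv: "\<And>y b. h (y(i := b)) = h y"
  shows "(\<integral>\<^sup>+y. ennreal \<bar>(p - pr i y) * h y\<bar> \<partial>bern_prod p)
    = ennreal (2 * p * (1 - p)) * (\<integral>\<^sup>+y. ennreal \<bar>h y\<bar> \<partial>bern_prod p)"
proof -
  have [measurable]: "h \<in> borel_measurable (PiM_pmf (\<lambda>_. bernoulli_pmf p))"
    using h by (rule measurable_bern_prod_PiM_pmf)
  have "(\<integral>\<^sup>+y. ennreal \<bar>(p - pr i y) * h y\<bar> \<partial>bern_prod p)
      = (\<integral>\<^sup>+y. ennreal \<bar>p - of_bool (y i)\<bar> * ennreal \<bar>h y\<bar> \<partial>PiM_pmf (\<lambda>_. bernoulli_pmf p))"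
    by (simp add: bern_prod_eq_PiM_pmf pr_eq_of_bool abs_mult ennreal_mult)
  also have "\<dots> = (\<integral>\<^sup>+c. ennreal \<bar>p - of_bool c\<bar> \<partial>bernoulli_pmf p)
      * (\<integral>\<^sup>+y. ennreal \<bar>h y\<bar> \<partial>bern_prod p)"
    unfolding bern_prod_eq_PiM_pmf by (rule nn_integral_PiM_pmf_mult_invariant) (simp_all add: inv)
  also have "(\<integral>\<^sup>+c. ennreal \<bar>p - of_bool c\<bar> \<partial>bernoulli_pmf p)
      = ennreal (1 - p) * p + ennreal p * (1 - p)"
    using assms(1,2) by simp
  also have "\<dots> = ennreal (2 * p * (1 - p))"
    using assms(1,2) by (simp flip: ennreal_mult ennreal_plus)
  finally show ?thesis .
qed

lemma influence_eq_nn_integral: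
  assumes "0 \<le> p" "p \<le> 1" and "g \<in> borel_measurable (bern_prod p)"
  shows "influence p i g = enn2real (\<integral>\<^sup>+x. ennreal \<bar>nabla p i g x\<bar> \<partial>bern_prod p)"
  unfolding influence_def using measurable_nabla[OF assms, of i]
  by (intro integral_eq_nn_integral) simp_all

lemma nn_integral_abs_nabla_Pt_le:
  fixes f :: "(nat \<Rightarrow> bool) \<Rightarrow> real"
  assumes p: "0 < p" "p < 1" and t: "0 \<le> t" and f: "integrable (bern_prod p) f"
  shows "(\<integral>\<^sup>+x. ennreal \<bar>nabla p i (Pt p t f) x\<bar> \<partial>bern_prod p)
    \<le> ennreal (exp (- t)) * (\<integral>\<^sup>+x. ennreal \<bar>nabla p i f x\<bar> \<partial>bern_prod p)"
proof -
  let ?B = "bern_prod p" and ?G = "Pt p t (coord_diff i f)" and ?c = "ennreal (2 * p * (1 - p))"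
  have [measurable]: "f \<in> borel_measurable ?B"
    using f by (rule borel_measurable_integrable)
  have "(\<integral>\<^sup>+x. ennreal \<bar>nabla p i (Pt p t f) x\<bar> \<partial>?B)
      = (\<integral>\<^sup>+x. ennreal (exp (- t)) * ennreal \<bar>(p - pr i x) * ?G x\<bar> \<partial>?B)"
    using AE_integrable_resample_slices[OF p t f, of i]
    by (intro nn_integral_cong_AE, eventually_elim)
      (use p t in \<open>simp add: nabla_Pt_eq abs_mult ennreal_mult mult.assoc\<close>)
  also have "\<dots> = ennreal (exp (- t)) * (?c * (\<integral>\<^sup>+x. ennreal \<bar>?G x\<bar> \<partial>?B))"
    using p
    by (simp add: nn_integral_cmult nn_integral_abs_centered_coord_mult Pt_fun_upd_invariant)
  also have "\<dots> \<le> ennreal (exp (- t)) * (?c * (\<integral>\<^sup>+x. ennreal \<bar>coord_diff i f x\<bar> \<partial>?B))"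
    using nn_integral_abs_integral_kernel_le[OF measurable_resample_kernel
        bind_bern_prod_resample_kernel, of p t "coord_diff i f"] p t
    by (intro mult_left_mono) (simp_all add: Pt_def)
  also have "\<dots> = ennreal (exp (- t)) * (\<integral>\<^sup>+x. ennreal \<bar>nabla p i f x\<bar> \<partial>?B)"
    using p by (simp add: nn_integral_abs_centered_coord_mult nabla_eq_coord_diff)
  finally show ?thesis .
qed

lemma influence_Pt_le:
  fixes f :: "(nat \<Rightarrow> bool) \<Rightarrow> real"
  assumes p: "0 < p" "p < 1" and t: "0 \<le> t" and f: "integrable (bern_prod p) f"
  shows "influence p i (Pt p t f) \<le> exp (- t) * influence p i f"
proof -
  have f_measurable[measurable]: "f \<in> borel_measurable (bern_prod p)"
    using f by (rule borel_measurable_integrable)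
  have finite: "(\<integral>\<^sup>+x. ennreal \<bar>nabla p i f x\<bar> \<partial>bern_prod p) < \<infinity>"
    using integrable_nabla[OF p f, of i] by (simp add: integrable_iff_bounded)
  have "influence p i (Pt p t f) = enn2real (\<integral>\<^sup>+x. ennreal \<bar>nabla p i (Pt p t f) x\<bar> \<partial>bern_prod p)"
    using p by (intro influence_eq_nn_integral) simp_all
  also have "\<dots> \<le> enn2real (ennreal (exp (- t)) * (\<integral>\<^sup>+x. ennreal \<bar>nabla p i f x\<bar> \<partial>bern_prod p))"
    using nn_integral_abs_nabla_Pt_le[OF p t f] finite
    by (intro enn2real_mono) (simp_all add: ennreal_mult_less_top)
  also have "\<dots> = exp (- t) * influence p i f"
    using p by (simp add: enn2real_mult influence_eq_nn_integral)
  finally show ?thesis .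
qed

theorem lemma2p4:
  fixes p t :: real and i :: nat and f :: "(nat \<Rightarrow> bool) \<Rightarrow> real"
  assumes "0 < p" "p < 1" "0 \<le> t" "f \<in> L2 p"
  shows "(AE x in bern_prod p.
            Pt p t (nabla p i f) x
              = exp (- t) * (p - pr i x) * Pt p t (\<lambda>y. nabla p i f y / (p - pr i y)) x)
       \<and> influence p i (Pt p t f) \<le> 2 * exp (- t) * max p (1 - p) * influence p i f"
proof
  have f: "f \<in> borel_measurable (bern_prod p)" "integrable (bern_prod p) (\<lambda>x. (f x)\<^sup>2)"
    using assms(4) by (auto simp: L2_def)
  have nabla: "nabla p i f = (\<lambda>y. (p - pr i y) * coord_diff i f y)"
    using assms(1,2) by (simp add: fun_eq_iff nabla_eq_coord_diff)
  moreover have "(\<lambda>y. nabla p i f y / (p - pr i y)) = coord_diff i f"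
    using assms(1,2) by (simp add: fun_eq_iff nabla pr_def)
  ultimately show "AE x in bern_prod p. Pt p t (nabla p i f) x
      = exp (- t) * (p - pr i x) * Pt p t (\<lambda>y. nabla p i f y / (p - pr i y)) x"
    using assms(1-3) f(1) by (simp add: Pt_centered_coord_mult)
  have "integrable (bern_prod p) f"
    using prob_space.axioms(1)[OF prob_space_bern_prod] f
    by (rule finite_measure.square_integrable_imp_integrable)
  with assms(1-3) have "influence p i (Pt p t f) \<le> exp (- t) * influence p i f"
    by (rule influence_Pt_le)
  also have "\<dots> \<le> 2 * exp (- t) * max p (1 - p) * influence p i f"
    by (intro mult_right_mono) (auto simp: influence_def max_def)
  finally show "influence p i (Pt p t f) \<le> 2 * exp (- t) * max p (1 - p) * influence p i f" .
qed

end
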